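(* Let $g=(c,\mathbb{U}^1,\mathbb{U}^2)$ be a zero-sum game satisfying Assumptions A2 and A4, and let the channels $Q^1,Q^2$ satisfy Assumption A6. For a prior $\zeta\in\mathcal{P}(\mathbb{X})$ let $\mu_\zeta(dx,dy^1,dy^2)=\zeta(dx)Q^1(dy^1|x)Q^2(dy^2|x)$. Let $\zeta_m\to\zeta$ weakly in $\mathcal{P}(\mathbb{X})$, and suppose saddle-point equilibria exist under $\mu_\zeta$ and under each $\mu_{\zeta_m}$. Then $J^*(g,\mu_{\zeta_m})\to J^*(g,\mu_\zeta)$; i.e. the value function is continuous under weak convergence of the priors.
   Context: $\mathbb{X},\mathbb{Y}^1,\mathbb{Y}^2$ are standard Borel spaces; $Q^i$ is a stochastic kernel (measurement channel) from $\mathbb{X}$ to $\mathbb{Y}^i$. A zero-sum game is $g=(c,\mathbb{U}^1,\mathbb{U}^2)$; policies are measurable $\gamma^i:\mathbb{Y}^i\to\mathbb{U}^i$; for an information structure $\mu$ on $\mathbb{X}\times\mathbb{Y}^1\times\mathbb{Y}^2$, $J(g,\mu,\gamma^1,\gamma^2)=\int c(x,\gamma^1(y^1),\gamma^2(y^2))\,d\mu$; Player 1 minimizes, Player 2 maximizes; a saddle point $(\gamma^{1,*},\gamma^{2,*})$ satisfies $\inf_{\gamma^1}J(g,\mu,\gamma^1,\gamma^{2,*})=J(g,\mu,\gamma^{1,*},\gamma^{2,*})=\sup_{\gamma^2}J(g,\mu,\gamma^{1,*},\gamma^2)$, and $J^*(g,\mu)$ is the cost at a saddle point. Weak convergence: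 $\int f\,d\zeta_m\to\int f\,d\zeta$ for all bounded continuous $f$. $\|\cdot\|_{TV}$: $\|P-R\|_{TV}=2\sup_B|P(B)-R(B)|$. Assumptions: A2: the cost is continuous and bounded. A4: each action space is compact. A6: the channels $Q^1,Q^2$ are fixed and conditionally independent given $x$ (so the information structure is $\zeta(dx)Q^1(dy^1|x)Q^2(dy^2|x)$), and each is continuous in total variation: $x_m\to x$ implies $\|Q^i(\cdot|x_m)-Q^i(\cdot|x)\|_{TV}\to0$. *)

theory Defs
  imports "HOL-Probability.Probability"
begin

definition borel_prob :: "'a::topological_space measure \<Rightarrow> bool" where
  "borel_prob P \<longleftrightarrow> prob_space P \<and> sets P = sets borel"

definition tv_dist :: "'a::topological_space measure \<Rightarrow> 'a measure \<Rightarrow> real" where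
  "tv_dist P R = 2 * (SUP B\<in>sets borel. \<bar>measure P B - measure R B\<bar>)"

definition stoch_kernel :: "('x::topological_space \<Rightarrow> 'y::topological_space measure) \<Rightarrow> bool" where
  "stoch_kernel Q \<longleftrightarrow> Q \<in> borel \<rightarrow>\<^sub>M prob_algebra borel"

definition tv_continuous :: "('x::topological_space \<Rightarrow> 'y::topological_space measure) \<Rightarrow> bool" where
  "tv_continuous Q \<longleftrightarrow>
     (\<forall>x xs. xs \<longlonglongrightarrow> x \<longrightarrow> (\<lambda>m. tv_dist (Q (xs m)) (Q x)) \<longlonglongrightarrow> 0)"

definition weak_conv_seq :: "(nat \<Rightarrow> 'a::topological_space measure) \<Rightarrow> 'a measure \<Rightarrow> bool" where
  "weak_conv_seq Ps P \<longleftrightarrow>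
     (\<forall>f::'a \<Rightarrow> real. continuous_on UNIV f \<and> bounded (range f) \<longrightarrow>
        (\<lambda>m. integral\<^sup>L (Ps m) f) \<longlonglongrightarrow> integral\<^sup>L P f)"

definition policies :: "'u::topological_space set \<Rightarrow> ('y::topological_space \<Rightarrow> 'u) set" where
  "policies U = {\<gamma>. \<gamma> \<in> borel_measurable borel \<and> (\<forall>y. \<gamma> y \<in> U)}"

text \<open>Expected cost J(g, mu_zeta, gamma1, gamma2) under the information structure
  mu_zeta(dx,dy1,dy2) = zeta(dx) Q1(dy1|x) Q2(dy2|x), written as the iterated integral.\<close>
definition Jcost ::
  "('x \<times> 'u1 \<times> 'u2 \<Rightarrow> real) \<Rightarrow> ('x \<Rightarrow> 'y1 measure) \<Rightarrow> ('x \<Rightarrow> 'y2 measure) \<Rightarrow>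
   'x measure \<Rightarrow> ('y1 \<Rightarrow> 'u1) \<Rightarrow> ('y2 \<Rightarrow> 'u2) \<Rightarrow> real" where
  "Jcost c Q1 Q2 \<zeta> \<gamma>1 \<gamma>2 =
     (\<integral>x. (\<integral>y1. (\<integral>y2. c (x, \<gamma>1 y1, \<gamma>2 y2) \<partial>Q2 x) \<partial>Q1 x) \<partial>\<zeta>)"

definition saddle_point ::
  "('x \<times> 'u1::topological_space \<times> 'u2::topological_space \<Rightarrow> real) \<Rightarrow> 'u1 set \<Rightarrow> 'u2 set \<Rightarrow>
   ('x \<Rightarrow> 'y1::topological_space measure) \<Rightarrow> ('x \<Rightarrow> 'y2::topological_space measure) \<Rightarrow>
   'x measure \<Rightarrow> ('y1 \<Rightarrow> 'u1) \<Rightarrow> ('y2 \<Rightarrow> 'u2) \<Rightarrow> bool" where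
  "saddle_point c U1 U2 Q1 Q2 \<zeta> \<gamma>1s \<gamma>2s \<longleftrightarrow>
     \<gamma>1s \<in> policies U1 \<and> \<gamma>2s \<in> policies U2 \<and>
     (INF \<gamma>1\<in>policies U1. Jcost c Q1 Q2 \<zeta> \<gamma>1 \<gamma>2s) = Jcost c Q1 Q2 \<zeta> \<gamma>1s \<gamma>2s \<and>
     Jcost c Q1 Q2 \<zeta> \<gamma>1s \<gamma>2s = (SUP \<gamma>2\<in>policies U2. Jcost c Q1 Q2 \<zeta> \<gamma>1s \<gamma>2)"

end

theory Submission
  imports Defs
begin

(* A saddle value is 1-Lipschitz in the payoff for the uniform distance over pairs of
   policies, so it suffices that J(zeta_m, gamma) tends to J(zeta, gamma) uniformly in gamma.
   Write J(zeta, gamma) as the zeta-integral of the expected cost F_gamma(x) given the state x.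
   The family F_gamma is uniformly bounded and equicontinuous: continuity of c together with
   compactness of the action sets controls the dependence of c on x, and total-variation
   continuity of the channels controls the observation laws, uniformly in the policies.
   Weak convergence is uniform on such families: by tightness of zeta and a finite partition
   of unity on a compact set, every F_gamma is approximated by a combination of finitely many
   fixed test functions. *)

lemma (in prob_space) abs_integral_le_const:
  fixes f :: "'a \<Rightarrow> real"
  assumes "\<And>x. x \<in> space M \<Longrightarrow> \<bar>f x\<bar> \<le> B"
  shows "\<bar>integral\<^sup>L M f\<bar> \<le> B"
proof (cases "integrable M f")
  case True
  have "\<bar>integral\<^sup>L M f\<bar> \<le> (\<integral>x. \<bar>f x\<bar> \<partial>M)" by (rule integral_abs_bound)
  also have "\<dots> \<le> (\<integral>x. B \<partial>M)" by (rule integral_mono) (use True assms in auto)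
  finally show ?thesis by (simp add: prob_space)
next
  case False
  have "0 \<le> B" using assms not_empty by force
  with False show ?thesis by (simp add: not_integrable_integral_eq)
qed

lemma (in prob_space) integrable_bounded:
  fixes f :: "'a \<Rightarrow> real"
  assumes "f \<in> borel_measurable M" "\<And>x. x \<in> space M \<Longrightarrow> \<bar>f x\<bar> \<le> B"
  shows "integrable M f"
  by (rule integrable_const_bound[where B=B]) (use assms in auto)

lemma (in prob_space) abs_integral_diff_le:
  fixes f g :: "'a \<Rightarrow> real"
  assumes "f \<in> borel_measurable M" "g \<in> borel_measurable M"
    and "\<And>x. x \<in> space M \<Longrightarrow> \<bar>f x\<bar> \<le> C" "\<And>x. x \<in> space M \<Longrightarrow> \<bar>g x\<bar> \<le> C"
    and "\<And>x. x \<in> space M \<Longrightarrow> \<bar>f x - g x\<bar> \<le> e"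
  shows "\<bar>integral\<^sup>L M f - integral\<^sup>L M g\<bar> \<le> e"
proof -
  have "integrable M f" "integrable M g"
    using integrable_bounded assms by blast+
  then have "integral\<^sup>L M f - integral\<^sup>L M g = (\<integral>x. f x - g x \<partial>M)" by simp
  also have "\<bar>\<dots>\<bar> \<le> e" by (rule abs_integral_le_const) (fact assms(5))
  finally show ?thesis .
qed

lemma borel_probD:
  assumes "borel_prob \<mu>"
  shows "prob_space \<mu>" "sets \<mu> = sets borel" "space \<mu> = UNIV"
  using assms sets_eq_imp_space_eq[of \<mu> borel] unfolding borel_prob_def by auto

lemma borel_prob_measurable:
  assumes "borel_prob \<mu>" "f \<in> borel_measurable borel"
  shows "f \<in> borel_measurable \<mu>"
  using assms measurable_cong_sets[OF borel_probD(2)[OF assms(1)] refl] by blast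

lemma stoch_kernel_borel_prob:
  assumes "stoch_kernel Q"
  shows "borel_prob (Q x)"
  using measurable_space[OF assms[unfolded stoch_kernel_def], of x]
  by (simp add: space_prob_algebra borel_prob_def)

section \<open>Total variation distance\<close>

lemma tv_dist_self [simp]: "tv_dist P P = 0"
proof -
  have "{} \<in> sets borel" by simp
  then have "sets borel \<noteq> {}" by blast
  then show ?thesis unfolding tv_dist_def using cSUP_const[of "sets borel" "0::real"] by simp
qed

lemma tv_continuousE:
  fixes Q :: "'x::metric_space \<Rightarrow> 'y::topological_space measure"
  assumes "tv_continuous Q" "0 < e"
  obtains d where "0 < d" "\<And>x'. dist x' x < d \<Longrightarrow> tv_dist (Q x') (Q x) < e"
proof -
  have "isCont (\<lambda>x'. tv_dist (Q x') (Q x)) x"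
    using assms(1) unfolding continuous_at_sequentially tv_continuous_def comp_def by simp
  with assms(2) that show ?thesis
    unfolding continuous_at_eps_delta by (force simp: dist_real_def)
qed

lemma card_le_floor:
  assumes "0 \<le> t" "t \<le> real n"
  shows "card {k\<in>{1..n}. real k \<le> t} = nat \<lfloor>t\<rfloor>"
proof -
  have "{k\<in>{1..n}. real k \<le> t} = {1..nat \<lfloor>t\<rfloor>}"
    using assms by (auto simp: le_nat_floor le_nat_iff le_floor_iff)
  then show ?thesis by simp
qed

lemma staircase_sum_bounds:
  fixes M v :: real and n :: nat
  assumes "0 < M" "0 < n" "0 \<le> v" "v \<le> M"
  defines "s \<equiv> M / n * (\<Sum>k=1..n. if k * M / n \<le> v then 1 else 0)"
  shows "0 \<le> v - s" "v - s \<le> M / n"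
proof -
  define t where "t = n * v / M"
  have t: "0 \<le> t" "t \<le> n" using assms by (auto simp: t_def field_simps)
  have "(k * M / n \<le> v) \<longleftrightarrow> real k \<le> t" for k :: nat
    using assms by (auto simp: t_def field_simps)
  then have "(\<Sum>k=1..n. if k * M / n \<le> v then 1 else 0) = real (card {k\<in>{1..n}. real k \<le> t})"
    using sum.inter_filter[of "{1..n}" "\<lambda>_. 1::real" "\<lambda>k. real k \<le> t"] by simp
  also have "\<dots> = \<lfloor>t\<rfloor>" using card_le_floor[OF t] t by simp
  finally have "v - s = M / n * (t - \<lfloor>t\<rfloor>)"
    using assms unfolding s_def t_def by (simp add: field_simps)
  moreover have "0 \<le> t - \<lfloor>t\<rfloor>" "t - \<lfloor>t\<rfloor> \<le> 1" by linarith+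
  moreover have "0 \<le> M / n" using assms by simp
  ultimately show "0 \<le> v - s" "v - s \<le> M / n"
    by (metis mult_nonneg_nonneg, metis mult_left_le)
qed

lemma abs_measure_diff_le_SUP:
  assumes "borel_prob P" "borel_prob Q" "A \<in> sets borel"
  shows "\<bar>measure P A - measure Q A\<bar> \<le> (SUP B\<in>sets borel. \<bar>measure P B - measure Q B\<bar>)"
proof (rule cSUP_upper[OF assms(3)])
  have "\<bar>measure P B - measure Q B\<bar> \<le> 1" for B
    using prob_space.prob_le_1[OF borel_probD(1)[OF assms(1)], of B]
      prob_space.prob_le_1[OF borel_probD(1)[OF assms(2)], of B]
      measure_nonneg[of P B] measure_nonneg[of Q B] by linarith
  then show "bdd_above ((\<lambda>B. \<bar>measure P B - measure Q B\<bar>) ` sets borel)"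
    by (intro bdd_aboveI2)
qed

lemma integral_sum_indicator:
  assumes "borel_prob R" "\<And>k. A k \<in> sets borel"
  shows "(\<integral>y. (\<Sum>k\<in>I. indicator (A k) y) \<partial>R) = (\<Sum>k\<in>I. measure R (A k) :: real)"
proof -
  have "integrable R (indicator (A k) :: _ \<Rightarrow> real)" for k
    by (rule prob_space.integrable_bounded[OF borel_probD(1)[OF assms(1)], where B=1])
       (auto intro: borel_prob_measurable[OF assms(1)] borel_measurable_indicator assms(2))
  then show ?thesis using borel_probD(3)[OF assms(1)] by simp
qed

lemma abs_integral_diff_le_SUP_nonneg:
  fixes f :: "'a::topological_space \<Rightarrow> real"
  assumes P: "borel_prob P" and Q: "borel_prob Q"
    and f: "f \<in> borel_measurable borel" "\<And>y. 0 \<le> f y" "\<And>y. f y \<le> M" and "0 < M"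
  shows "\<bar>integral\<^sup>L P f - integral\<^sup>L Q f\<bar> \<le> M * (SUP B\<in>sets borel. \<bar>measure P B - measure Q B\<bar>)"
    (is "_ \<le> M * ?s")
proof (rule field_le_epsilon)
  fix e :: real assume "0 < e"
  then obtain n :: nat where n: "2 * M / e < n" using reals_Archimedean2 by blast
  then have "0 < n" using \<open>0 < M\<close> \<open>0 < e\<close> by (smt (verit) divide_pos_pos of_nat_0_less_iff)
  define A where "A k = {y. k * M / n \<le> f y}" for k :: nat
  have A[measurable]: "A k \<in> sets borel" for k unfolding A_def using f(1) by measurable
  \<comment> \<open>Staircase approximation of f from below by indicators of superlevel sets.\<close>
  define g where "g y = M / n * (\<Sum>k=1..n. indicator (A k) y)" for y
  have "g y = M / n * (\<Sum>k=1..n. if k * M / n \<le> f y then 1 else 0)" for y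
    unfolding g_def A_def by (intro arg_cong[where f="(*) _"] sum.cong) auto
  then have g: "0 \<le> f y - g y" "f y - g y \<le> M / n" for y
    using staircase_sum_bounds[OF \<open>0 < M\<close> \<open>0 < n\<close> f(2,3)] by simp_all
  have f_g: "\<bar>integral\<^sup>L R f - integral\<^sup>L R g\<bar> \<le> M / n" if R: "borel_prob R" for R
  proof (rule prob_space.abs_integral_diff_le[OF borel_probD(1)[OF R]])
    show "f \<in> borel_measurable R" by (rule borel_prob_measurable[OF R f(1)])
    show "g \<in> borel_measurable R" unfolding g_def by (rule borel_prob_measurable[OF R]) measurable
    have "0 \<le> M / n" using \<open>0 < M\<close> by simp
    then show "\<bar>f y\<bar> \<le> M + M / n" "\<bar>g y\<bar> \<le> M + M / n" "\<bar>f y - g y\<bar> \<le> M / n" for y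
      using f(2,3)[of y] g[of y] by linarith+
  qed
  have "\<bar>integral\<^sup>L P g - integral\<^sup>L Q g\<bar> = M / n * \<bar>\<Sum>k=1..n. measure P (A k) - measure Q (A k)\<bar>"
    using \<open>0 < M\<close> unfolding g_def integral_mult_right_zero
      integral_sum_indicator[OF P A] integral_sum_indicator[OF Q A]
    by (simp add: sum_subtractf abs_mult flip: diff_divide_distrib right_diff_distrib)
  also have "\<dots> \<le> M / n * (\<Sum>k=1..n. ?s)"
  proof (rule mult_left_mono)
    have "\<bar>\<Sum>k=1..n. measure P (A k) - measure Q (A k)\<bar> \<le> (\<Sum>k=1..n. \<bar>measure P (A k) - measure Q (A k)\<bar>)"
      by (rule sum_abs)
    also have "\<dots> \<le> (\<Sum>k=1..n. ?s)"
      by (intro sum_mono abs_measure_diff_le_SUP[OF P Q A])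
    finally show "\<bar>\<Sum>k=1..n. measure P (A k) - measure Q (A k)\<bar> \<le> (\<Sum>k=1..n. ?s)" .
  qed (use \<open>0 < M\<close> in simp)
  also have "\<dots> = M * ?s" using \<open>0 < n\<close> by simp
  finally have "\<bar>integral\<^sup>L P g - integral\<^sup>L Q g\<bar> \<le> M * ?s" .
  moreover have "2 * M / n < e" using n \<open>0 < n\<close> \<open>0 < e\<close> by (simp add: field_simps)
  ultimately show "\<bar>integral\<^sup>L P f - integral\<^sup>L Q f\<bar> \<le> M * ?s + e"
    using f_g[OF P] f_g[OF Q] by linarith
qed

lemma abs_integral_diff_le_tv_dist:
  fixes f :: "'a::topological_space \<Rightarrow> real"
  assumes P: "borel_prob P" and Q: "borel_prob Q"
    and f: "f \<in> borel_measurable borel" "\<And>y. \<bar>f y\<bar> \<le> B"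
  shows "\<bar>integral\<^sup>L P f - integral\<^sup>L Q f\<bar> \<le> B * tv_dist P Q"
proof (cases "B = 0")
  case True
  then have "f = (\<lambda>_. 0)" using f(2) by force
  with True show ?thesis by simp
next
  case False
  then have "0 < B" using f(2)[of undefined] by linarith
  have shift: "(\<integral>y. f y + B \<partial>R) = integral\<^sup>L R f + B" if R: "borel_prob R" for R
  proof -
    interpret prob_space R by (rule borel_probD(1)[OF R])
    have "integrable R f" by (rule integrable_bounded[OF borel_prob_measurable[OF R f(1)] f(2)])
    then show ?thesis by (simp add: prob_space)
  qed
  have "\<bar>(\<integral>y. f y + B \<partial>P) - (\<integral>y. f y + B \<partial>Q)\<bar>
      \<le> (2 * B) * (SUP A\<in>sets borel. \<bar>measure P A - measure Q A\<bar>)"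
  proof (rule abs_integral_diff_le_SUP_nonneg[OF P Q])
    show "(\<lambda>y. f y + B) \<in> borel_measurable borel" using f(1) by simp
    show "0 \<le> f y + B" "f y + B \<le> 2 * B" for y using f(2)[of y] by linarith+
  qed (use \<open>0 < B\<close> in simp)
  then show ?thesis by (simp add: shift[OF P] shift[OF Q] tv_dist_def)
qed

section \<open>Weak convergence on equicontinuous families\<close>

lemma borel_prob_tight:
  fixes \<zeta> :: "'x::polish_space measure"
  assumes "borel_prob \<zeta>" "0 < \<eta>"
  obtains K where "compact K" "measure \<zeta> (UNIV - K) \<le> \<eta>"
proof -
  interpret prob_space \<zeta> by (rule borel_probD(1)[OF assms(1)])
  have sp: "space \<zeta> = UNIV" "sets \<zeta> = sets borel" using borel_probD[OF assms(1)] by auto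
  show ?thesis
  proof (cases "1 \<le> \<eta>")
    case True
    then show ?thesis using that[of "{}"] prob_le_1[of UNIV] by simp
  next
    case False
    have "emeasure \<zeta> UNIV = (SUP K \<in> {K. K \<subseteq> UNIV \<and> compact K}. emeasure \<zeta> K)"
      by (rule inner_regular) (use sp in auto)
    moreover have "ennreal (1 - \<eta>) < emeasure \<zeta> UNIV"
      using False assms(2) emeasure_space_1 sp by (simp add: ennreal_lessI)
    ultimately obtain K where K: "compact K" "ennreal (1 - \<eta>) < emeasure \<zeta> K"
      by (auto simp: less_SUP_iff)
    then have "1 - \<eta> < measure \<zeta> K"
      using False by (simp add: emeasure_eq_measure ennreal_less_iff)
    moreover have "K \<in> events" using K(1) sp by (simp add: compact_imp_closed borel_closed)
    ultimately show ?thesis using that[OF K(1)] prob_compl[of K] sp by simp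
  qed
qed

lemma compact_partition_of_unity:
  fixes K :: "'a::metric_space set"
  assumes "compact K" "\<And>x. 0 < r x"
  obtains S :: "'a set" and \<phi> :: "'a \<Rightarrow> 'a \<Rightarrow> real" and h :: "'a \<Rightarrow> real"
  where "finite S" "\<And>s. continuous_on UNIV (\<phi> s)" "continuous_on UNIV h"
    "\<And>s x. 0 \<le> \<phi> s x" "\<And>s x. 0 < \<phi> s x \<Longrightarrow> dist x s < r s"
    "\<And>x. (\<Sum>s\<in>S. \<phi> s x) + h x = 1" "\<And>x. 0 \<le> h x" "\<And>x. x \<in> K \<Longrightarrow> h x = 0"
proof -
  have cover: "K \<subseteq> (\<Union>x\<in>K. ball x (r x / 2))" using assms(2) by auto
  obtain S where S: "S \<subseteq> K" "finite S" "K \<subseteq> (\<Union>s\<in>S. ball s (r s / 2))"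
    by (rule compactE_image[OF assms(1) _ cover]) auto
  define w where "w s x = max 0 (r s - dist x s)" for s x
  define \<rho> where "\<rho> = Min (insert 1 ((\<lambda>s. r s / 2) ` S))"
  \<comment> \<open>The floor \<rho> keeps the denominator positive; on K the weights alone exceed it.\<close>
  define D where "D x = max (\<Sum>s\<in>S. w s x) \<rho>" for x
  define \<phi> where "\<phi> s x = w s x / D x" for s x
  define h where "h x = 1 - (\<Sum>s\<in>S. \<phi> s x)" for x
  have "0 < \<rho>" unfolding \<rho>_def using S(2) assms(2) by simp
  then have D: "0 < D x" "(\<Sum>s\<in>S. w s x) \<le> D x" for x unfolding D_def by auto
  have w: "0 \<le> w s x" for s x unfolding w_def by simp
  have sum_\<phi>: "(\<Sum>s\<in>S. \<phi> s x) = (\<Sum>s\<in>S. w s x) / D x" for x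
    unfolding \<phi>_def by (simp add: sum_divide_distrib)
  show ?thesis
  proof
    show "finite S" by (fact S(2))
    have cont_w: "continuous_on UNIV (w s)" for s unfolding w_def by (intro continuous_intros)
    have "continuous_on UNIV D" unfolding D_def by (intro continuous_intros cont_w)
    then show cont: "continuous_on UNIV (\<phi> s)" for s
      unfolding \<phi>_def using D(1) by (intro continuous_on_divide cont_w) (auto simp: less_le)
    show "continuous_on UNIV h" unfolding h_def by (intro continuous_intros cont)
    show "0 \<le> \<phi> s x" for s x unfolding \<phi>_def using w[of s x] D(1)[of x] by simp
    show "dist x s < r s" if "0 < \<phi> s x" for s x
      using that D(1)[of x] unfolding \<phi>_def w_def by (simp add: zero_less_divide_iff)
    show "(\<Sum>s\<in>S. \<phi> s x) + h x = 1" for x unfolding h_def by simp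
    show "0 \<le> h x" for x unfolding h_def sum_\<phi> using D[of x] by simp
    show "h x = 0" if "x \<in> K" for x
    proof -
      obtain s where s: "s \<in> S" "dist x s < r s / 2" using S(3) \<open>x \<in> K\<close> by (auto simp: dist_commute)
      have "\<rho> \<le> r s / 2" unfolding \<rho>_def using s(1) S(2) by (intro Min_le) auto
      also have "r s / 2 \<le> w s x" unfolding w_def using s(2) by linarith
      also have "w s x \<le> (\<Sum>s\<in>S. w s x)" by (rule member_le_sum[OF s(1) _ S(2)]) (simp add: w)
      finally have "D x = (\<Sum>s\<in>S. w s x)" unfolding D_def by simp
      then show ?thesis unfolding h_def sum_\<phi> using D(1)[of x] by simp
    qed
  qed
qed

lemma abs_diff_sum_weighted_le:
  fixes a \<eta> B h :: real and b \<phi> :: "'s \<Rightarrow> real"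
  assumes "finite S" "\<And>s. 0 \<le> \<phi> s" "(\<Sum>s\<in>S. \<phi> s) + h = 1" "0 \<le> h" "0 \<le> \<eta>" "\<bar>a\<bar> \<le> B"
    and close: "\<And>s. s \<in> S \<Longrightarrow> 0 < \<phi> s \<Longrightarrow> \<bar>a - b s\<bar> \<le> \<eta>"
  shows "\<bar>a - (\<Sum>s\<in>S. \<phi> s * b s)\<bar> \<le> \<eta> + B * h"
proof -
  have "(\<Sum>s\<in>S. \<phi> s * (a - b s)) = a * (\<Sum>s\<in>S. \<phi> s) - (\<Sum>s\<in>S. \<phi> s * b s)"
    by (simp add: right_diff_distrib sum_subtractf sum_distrib_left mult.commute)
  moreover have "a = a * h + a * (\<Sum>s\<in>S. \<phi> s)"
    using assms(3) by (metis add.commute distrib_left mult.right_neutral)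
  ultimately have "a - (\<Sum>s\<in>S. \<phi> s * b s) = a * h + (\<Sum>s\<in>S. \<phi> s * (a - b s))"
    by linarith
  moreover have "\<bar>a * h\<bar> \<le> B * h" using assms(4,6) by (simp add: abs_mult mult_right_mono)
  moreover have "\<bar>\<Sum>s\<in>S. \<phi> s * (a - b s)\<bar> \<le> \<eta>"
  proof -
    have "\<bar>\<Sum>s\<in>S. \<phi> s * (a - b s)\<bar> \<le> (\<Sum>s\<in>S. \<bar>\<phi> s * (a - b s)\<bar>)" by (rule sum_abs)
    also have "\<dots> \<le> (\<Sum>s\<in>S. \<phi> s * \<eta>)"
    proof (rule sum_mono)
      fix s assume "s \<in> S"
      show "\<bar>\<phi> s * (a - b s)\<bar> \<le> \<phi> s * \<eta>"
      proof (cases "\<phi> s = 0")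
        case False
        then have "\<bar>a - b s\<bar> \<le> \<eta>" using close[OF \<open>s \<in> S\<close>] assms(2)[of s] by simp
        then show ?thesis using assms(2)[of s] by (simp add: abs_mult mult_left_mono)
      qed simp
    qed
    also have "\<dots> = (\<Sum>s\<in>S. \<phi> s) * \<eta>" by (simp add: sum_distrib_right)
    also have "\<dots> \<le> \<eta>" using assms(2-5) by (intro mult_left_le_one_le sum_nonneg) auto
    finally show ?thesis .
  qed
  ultimately show ?thesis by linarith
qed

lemma (in prob_space) abs_integral_diff_le_integral:
  fixes f g h :: "'a \<Rightarrow> real"
  assumes "integrable M f" "integrable M g" "integrable M h"
    and "\<And>x. x \<in> space M \<Longrightarrow> \<bar>f x - g x\<bar> \<le> \<eta> + B * h x"
  shows "\<bar>integral\<^sup>L M f - integral\<^sup>L M g\<bar> \<le> \<eta> + B * integral\<^sup>L M h"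
proof -
  have "\<bar>integral\<^sup>L M f - integral\<^sup>L M g\<bar> = \<bar>\<integral>x. f x - g x \<partial>M\<bar>" using assms(1,2) by simp
  also have "\<dots> \<le> (\<integral>x. \<bar>f x - g x\<bar> \<partial>M)" by (rule integral_abs_bound)
  also have "\<dots> \<le> (\<integral>x. \<eta> + B * h x \<partial>M)" using assms by (intro integral_mono) auto
  also have "\<dots> = \<eta> + B * integral\<^sup>L M h" using assms(3) by (simp add: prob_space)
  finally show ?thesis .
qed

lemma weak_conv_seq_tendsto:
  fixes f :: "'a::topological_space \<Rightarrow> real"
  assumes "weak_conv_seq \<zeta>s \<zeta>" "continuous_on UNIV f" "\<And>x. \<bar>f x\<bar> \<le> C"
  shows "(\<lambda>m. integral\<^sup>L (\<zeta>s m) f) \<longlonglongrightarrow> integral\<^sup>L \<zeta> f"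
proof -
  have "bounded (range f)" unfolding bounded_iff using assms(3) by auto
  then show ?thesis using assms(1,2) unfolding weak_conv_seq_def by blast
qed

lemma integral_le_measure_Compl:
  fixes h :: "'a::topological_space \<Rightarrow> real"
  assumes \<mu>: "borel_prob \<mu>" and "closed K" "h \<in> borel_measurable borel"
    and "\<And>x. 0 \<le> h x" "\<And>x. h x \<le> 1" "\<And>x. x \<in> K \<Longrightarrow> h x = 0"
  shows "integral\<^sup>L \<mu> h \<le> measure \<mu> (UNIV - K)"
proof -
  interpret prob_space \<mu> by (rule borel_probD(1)[OF \<mu>])
  have "UNIV - K \<in> sets \<mu>" using assms(2) borel_probD(2)[OF \<mu>] by simp
  then have "integrable \<mu> (indicator (UNIV - K) :: 'a \<Rightarrow> real)"
    by (simp add: integrable_indicator_iff less_top[symmetric])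
  moreover have "integrable \<mu> h"
    using assms(4,5) by (intro integrable_bounded[where B=1] borel_prob_measurable[OF \<mu> assms(3)]) auto
  moreover have "h x \<le> indicator (UNIV - K) x" for x
    using assms(5,6) by (cases "x \<in> K") auto
  ultimately have "integral\<^sup>L \<mu> h \<le> integral\<^sup>L \<mu> (indicator (UNIV - K))"
    by (intro integral_mono)
  then show ?thesis using borel_probD(3)[OF \<mu>] by simp
qed

lemma abs_integral_diff_weighted_sum_le:
  fixes F h :: "'a::topological_space \<Rightarrow> real" and \<phi> :: "'a \<Rightarrow> 'a \<Rightarrow> real"
  assumes R: "borel_prob R"
    and F: "F \<in> borel_measurable borel" "\<And>x. \<bar>F x\<bar> \<le> B"
    and \<phi>: "\<And>s. s \<in> S \<Longrightarrow> \<phi> s \<in> borel_measurable borel" "\<And>s x. s \<in> S \<Longrightarrow> \<bar>\<phi> s x\<bar> \<le> 1"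
    and h: "h \<in> borel_measurable borel" "\<And>x. \<bar>h x\<bar> \<le> 1"
    and approx: "\<And>x. \<bar>F x - (\<Sum>s\<in>S. \<phi> s x * F s)\<bar> \<le> \<eta> + B * h x"
  shows "\<bar>integral\<^sup>L R F - (\<Sum>s\<in>S. F s * integral\<^sup>L R (\<phi> s))\<bar> \<le> \<eta> + B * integral\<^sup>L R h"
proof -
  interpret prob_space R by (rule borel_probD(1)[OF R])
  have int_\<phi>: "integrable R (\<phi> s)" if "s \<in> S" for s
    using \<phi> that by (intro integrable_bounded[where B=1] borel_prob_measurable[OF R]) auto
  then have "(\<Sum>s\<in>S. F s * integral\<^sup>L R (\<phi> s)) = (\<integral>x. (\<Sum>s\<in>S. \<phi> s x * F s) \<partial>R)"
    by (simp add: mult.commute)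
  moreover have "integrable R (\<lambda>x. \<Sum>s\<in>S. \<phi> s x * F s)" using int_\<phi> by auto
  then have "\<bar>integral\<^sup>L R F - (\<integral>x. (\<Sum>s\<in>S. \<phi> s x * F s) \<partial>R)\<bar> \<le> \<eta> + B * integral\<^sup>L R h"
    using integrable_bounded[OF borel_prob_measurable[OF R F(1)] F(2)]
      integrable_bounded[OF borel_prob_measurable[OF R h(1)] h(2)] approx
    by (intro abs_integral_diff_le_integral)
  ultimately show ?thesis by simp
qed

lemma equicontinuous_finite_approximation:
  fixes F :: "'i \<Rightarrow> 'x::polish_space \<Rightarrow> real"
  assumes \<zeta>: "borel_prob \<zeta>" and bound: "\<And>i x. i \<in> I \<Longrightarrow> \<bar>F i x\<bar> \<le> B"
    and equicont: "\<And>x e. 0 < e \<Longrightarrow> \<exists>d>0. \<forall>x'. dist x' x < d \<longrightarrow> (\<forall>i\<in>I. \<bar>F i x' - F i x\<bar> \<le> e)"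
    and "0 < \<eta>"
  obtains S :: "'x set" and \<phi> :: "'x \<Rightarrow> 'x \<Rightarrow> real" and h :: "'x \<Rightarrow> real"
  where "\<And>s. continuous_on UNIV (\<phi> s)" "\<And>s x. s \<in> S \<Longrightarrow> \<bar>\<phi> s x\<bar> \<le> 1"
    "continuous_on UNIV h" "\<And>x. \<bar>h x\<bar> \<le> 1" "integral\<^sup>L \<zeta> h \<le> \<eta>"
    "\<And>R i. borel_prob (R :: 'x measure) \<Longrightarrow> i \<in> I \<Longrightarrow>
      \<bar>integral\<^sup>L R (F i) - (\<Sum>s\<in>S. F i s * integral\<^sup>L R (\<phi> s))\<bar> \<le> \<eta> + B * integral\<^sup>L R h"
proof -
  obtain K where K: "compact K" "measure \<zeta> (UNIV - K) \<le> \<eta>"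
    using borel_prob_tight[OF \<zeta> \<open>0 < \<eta>\<close>] .
  have "\<forall>x. \<exists>d. 0 < d \<and> (\<forall>x'. dist x' x < d \<longrightarrow> (\<forall>i\<in>I. \<bar>F i x' - F i x\<bar> \<le> \<eta>))"
    using equicont[OF \<open>0 < \<eta>\<close>] by blast
  then obtain r where r: "\<And>x. 0 < r x" "\<And>x x' i. dist x' x < r x \<Longrightarrow> i \<in> I \<Longrightarrow> \<bar>F i x' - F i x\<bar> \<le> \<eta>"
    unfolding choice_iff by blast
  obtain S and \<phi> :: "'x \<Rightarrow> 'x \<Rightarrow> real" and h :: "'x \<Rightarrow> real"
    where S: "finite S" and \<phi>_cont: "\<And>s. continuous_on UNIV (\<phi> s)" and h_cont: "continuous_on UNIV h"
      and \<phi>: "\<And>s x. 0 \<le> \<phi> s x" "\<And>s x. 0 < \<phi> s x \<Longrightarrow> dist x s < r s"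
      and sum_\<phi>_h: "\<And>x. (\<Sum>s\<in>S. \<phi> s x) + h x = 1" and h: "\<And>x. 0 \<le> h x" "\<And>x. x \<in> K \<Longrightarrow> h x = 0"
    using compact_partition_of_unity[of K r] K(1) r(1) by blast
  have \<phi>_le: "\<bar>\<phi> s x\<bar> \<le> 1" if "s \<in> S" for s x
    using member_le_sum[OF that, of "\<lambda>s. \<phi> s x"] \<phi>(1) h(1)[of x] sum_\<phi>_h[of x] S by force
  have h_le: "\<bar>h x\<bar> \<le> 1" for x
    using sum_nonneg[of S "\<lambda>s. \<phi> s x"] \<phi>(1) h(1)[of x] sum_\<phi>_h[of x] by force
  have F_cont: "continuous_on UNIV (F i)" if "i \<in> I" for i
    unfolding continuous_on_iff dist_real_def
    using equicont[of "_ / 2"] that by (metis field_sum_of_halves half_gt_zero less_add_same_cancel1 order_le_less_trans)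
  show ?thesis
  proof (rule that[OF \<phi>_cont \<phi>_le h_cont h_le])
    show "integral\<^sup>L \<zeta> h \<le> \<eta>"
      using integral_le_measure_Compl[OF \<zeta> compact_imp_closed[OF K(1)]] h h_le K(2)
        borel_measurable_continuous_onI[OF h_cont] by (smt (verit))
    fix R :: "'x measure" and i assume R: "borel_prob R" and "i \<in> I"
    show "\<bar>integral\<^sup>L R (F i) - (\<Sum>s\<in>S. F i s * integral\<^sup>L R (\<phi> s))\<bar> \<le> \<eta> + B * integral\<^sup>L R h"
    proof (rule abs_integral_diff_weighted_sum_le[OF R _ bound[OF \<open>i \<in> I\<close>] _ \<phi>_le _ h_le])
      show "\<bar>F i x - (\<Sum>s\<in>S. \<phi> s x * F i s)\<bar> \<le> \<eta> + B * h x" for x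
        by (rule abs_diff_sum_weighted_le[OF S \<phi>(1) sum_\<phi>_h h(1) less_imp_le[OF \<open>0 < \<eta>\<close>] bound[OF \<open>i \<in> I\<close>]])
           (use r(2)[OF \<phi>(2)] \<open>i \<in> I\<close> in blast)
    qed (use F_cont[OF \<open>i \<in> I\<close>] \<phi>_cont h_cont in \<open>auto intro: borel_measurable_continuous_onI\<close>)
  qed
qed

lemma weak_conv_seq_eventually_sum_abs_less:
  fixes f :: "'s \<Rightarrow> 'a::topological_space \<Rightarrow> real"
  assumes "weak_conv_seq \<zeta>s \<zeta>" "\<And>s. s \<in> S \<Longrightarrow> continuous_on UNIV (f s)"
    "\<And>s x. s \<in> S \<Longrightarrow> \<bar>f s x\<bar> \<le> C" "0 < \<delta>"
  shows "eventually (\<lambda>m. (\<Sum>s\<in>S. \<bar>integral\<^sup>L (\<zeta>s m) (f s) - integral\<^sup>L \<zeta> (f s)\<bar>) < \<delta>) sequentially"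
proof -
  have "(\<lambda>m. \<Sum>s\<in>S. \<bar>integral\<^sup>L (\<zeta>s m) (f s) - integral\<^sup>L \<zeta> (f s)\<bar>) \<longlonglongrightarrow> (\<Sum>s\<in>S. 0)"
    using weak_conv_seq_tendsto[OF assms(1-3)] by (intro tendsto_sum tendsto_rabs_zero LIM_zero)
  with assms(4) show ?thesis by (intro order_tendstoD(2)) auto
qed

lemma weak_conv_seq_uniform_equicontinuous:
  fixes F :: "'i \<Rightarrow> 'x::polish_space \<Rightarrow> real"
  assumes prior: "borel_prob \<zeta>" "\<And>m. borel_prob (\<zeta>s m)" and weak: "weak_conv_seq \<zeta>s \<zeta>"
    and bound: "\<And>i x. i \<in> I \<Longrightarrow> \<bar>F i x\<bar> \<le> B"
    and equicont: "\<And>x e. 0 < e \<Longrightarrow> \<exists>d>0. \<forall>x'. dist x' x < d \<longrightarrow> (\<forall>i\<in>I. \<bar>F i x' - F i x\<bar> \<le> e)"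
    and "0 < e"
  shows "eventually (\<lambda>m. \<forall>i\<in>I. \<bar>integral\<^sup>L (\<zeta>s m) (F i) - integral\<^sup>L \<zeta> (F i)\<bar> \<le> e) sequentially"
proof (cases "I = {}")
  case False
  then have "0 \<le> B" using bound by (meson abs_ge_zero ex_in_conv order_trans)
  define \<eta> where "\<eta> = e / (3 * B + 3)"
  have "0 < \<eta>" unfolding \<eta>_def using \<open>0 \<le> B\<close> \<open>0 < e\<close> by simp
  have "e = (3 * B + 3) * \<eta>" unfolding \<eta>_def using \<open>0 \<le> B\<close> by simp
  then have e_eq: "e = 3 * \<eta> + 3 * (B * \<eta>)" by (simp add: algebra_simps)
  have "0 < \<eta> / (B + 1)" using \<open>0 < \<eta>\<close> \<open>0 \<le> B\<close> by simp
  show ?thesis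
  proof (rule equicontinuous_finite_approximation[OF prior(1) bound equicont \<open>0 < \<eta>\<close>])
    fix S and \<phi> :: "'x \<Rightarrow> 'x \<Rightarrow> real" and h :: "'x \<Rightarrow> real"
    assume \<phi>: "\<And>s. continuous_on UNIV (\<phi> s)" "\<And>s x. s \<in> S \<Longrightarrow> \<bar>\<phi> s x\<bar> \<le> 1"
      and h: "continuous_on UNIV h" "\<And>x. \<bar>h x\<bar> \<le> 1" "integral\<^sup>L \<zeta> h \<le> \<eta>"
      and approx: "\<And>R i. borel_prob (R :: 'x measure) \<Longrightarrow> i \<in> I \<Longrightarrow>
        \<bar>integral\<^sup>L R (F i) - (\<Sum>s\<in>S. F i s * integral\<^sup>L R (\<phi> s))\<bar> \<le> \<eta> + B * integral\<^sup>L R h"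
    have "eventually (\<lambda>m. (\<Sum>s\<in>S. \<bar>integral\<^sup>L (\<zeta>s m) (\<phi> s) - integral\<^sup>L \<zeta> (\<phi> s)\<bar>) < \<eta> / (B + 1)) sequentially"
      by (rule weak_conv_seq_eventually_sum_abs_less[OF weak]) (use \<phi> \<open>0 < \<eta> / (B + 1)\<close> in auto)
    moreover have "(\<lambda>m. \<bar>integral\<^sup>L (\<zeta>s m) h - integral\<^sup>L \<zeta> h\<bar>) \<longlonglongrightarrow> 0"
      by (intro tendsto_rabs_zero LIM_zero weak_conv_seq_tendsto[OF weak h(1,2)])
    then have "eventually (\<lambda>m. \<bar>integral\<^sup>L (\<zeta>s m) h - integral\<^sup>L \<zeta> h\<bar> < \<eta>) sequentially"
      using \<open>0 < \<eta>\<close> by (rule order_tendstoD(2))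
    ultimately show ?thesis
    proof (eventually_elim, intro ballI)
      fix m i
      let ?d = "\<lambda>s. \<bar>integral\<^sup>L (\<zeta>s m) (\<phi> s) - integral\<^sup>L \<zeta> (\<phi> s)\<bar>"
      assume "(\<Sum>s\<in>S. ?d s) < \<eta> / (B + 1)" "\<bar>integral\<^sup>L (\<zeta>s m) h - integral\<^sup>L \<zeta> h\<bar> < \<eta>"
        and "i \<in> I"
      moreover have "B * (\<eta> / (B + 1)) \<le> \<eta>" using \<open>0 < \<eta>\<close> \<open>0 \<le> B\<close> by (simp add: field_simps)
      ultimately have small: "B * (\<Sum>s\<in>S. ?d s) \<le> \<eta>" "integral\<^sup>L (\<zeta>s m) h \<le> 2 * \<eta>"
        using h(3) mult_left_mono[of "\<Sum>s\<in>S. ?d s" "\<eta> / (B + 1)" B] \<open>0 \<le> B\<close> by simp_all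
      have "\<bar>(\<Sum>s\<in>S. F i s * integral\<^sup>L (\<zeta>s m) (\<phi> s)) - (\<Sum>s\<in>S. F i s * integral\<^sup>L \<zeta> (\<phi> s))\<bar>
          \<le> B * (\<Sum>s\<in>S. ?d s)"
        unfolding sum_distrib_left sum_subtractf[symmetric] right_diff_distrib[symmetric]
        using bound[OF \<open>i \<in> I\<close>]
        by (intro order_trans[OF sum_abs] sum_mono) (simp add: abs_mult mult_right_mono)
      then show "\<bar>integral\<^sup>L (\<zeta>s m) (F i) - integral\<^sup>L \<zeta> (F i)\<bar> \<le> e"
        using approx[OF prior(2) \<open>i \<in> I\<close>, of m] approx[OF prior(1) \<open>i \<in> I\<close>] small e_eq
          mult_left_mono[OF small(2) \<open>0 \<le> B\<close>] mult_left_mono[OF h(3) \<open>0 \<le> B\<close>]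
        by linarith
    qed
  qed
qed simp

lemma measurable_continuous_on_closed_comp:
  fixes f :: "'a::topological_space \<Rightarrow> 'b::real_normed_vector"
  assumes "continuous_on S f" "closed S" "g \<in> M \<rightarrow>\<^sub>M borel" "\<And>z. z \<in> space M \<Longrightarrow> g z \<in> S"
  shows "(\<lambda>z. f (g z)) \<in> borel_measurable M"
proof -
  have "(\<lambda>x. indicator S x *\<^sub>R f x) \<in> borel_measurable borel"
    using assms(1,2) by (intro borel_measurable_continuous_on_indicator) auto
  from measurable_compose[OF assms(3) this] show ?thesis
    by (rule measurable_cong[THEN iffD1, rotated]) (use assms(4) in auto)
qed

lemma continuous_on_uniform_in_compact_param:
  fixes f :: "'a::metric_space \<times> 'b::topological_space \<Rightarrow> real"
  assumes "continuous_on (UNIV \<times> U) f" "compact U" "0 < e"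
  obtains d where "0 < d" "\<And>x' u. dist x' x < d \<Longrightarrow> u \<in> U \<Longrightarrow> \<bar>f (x', u) - f (x, u)\<bar> < e"
proof -
  let ?g = "\<lambda>z. f z - f (x, snd z)"
  have "continuous_on (UNIV \<times> U) (\<lambda>z. f (x, snd z))"
    by (rule continuous_on_compose2[OF assms(1)]) (auto intro!: continuous_intros)
  then have "continuous_on (UNIV \<times> U) ?g" using assms(1) by (intro continuous_intros)
  then obtain A where A: "open A" "A \<inter> (UNIV \<times> U) = ?g -` ball 0 e \<inter> (UNIV \<times> U)"
    unfolding continuous_on_open_invariant by (meson open_ball)
  \<comment> \<open>The tube lemma thickens the fibre \<open>{x} \<times> U\<close>, on which \<open>?g\<close> vanishes, to a product neighbourhood.\<close>
  have "{x} \<times> U \<subseteq> A" using A(2) assms(3) by auto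
  then obtain X where X: "x \<in> X" "open X" "X \<times> U \<subseteq> A" using Elementary_Topology.tube_lemma[OF assms(2) A(1)] by blast
  then obtain d where d: "0 < d" "ball x d \<subseteq> X" by (meson open_contains_ball)
  show ?thesis
  proof (rule that[OF d(1)])
    fix x' u assume "dist x' x < d" "u \<in> U"
    then have "(x', u) \<in> A \<inter> (UNIV \<times> U)" using d(2) X(3) by (auto simp: dist_commute)
    then show "\<bar>f (x', u) - f (x, u)\<bar> < e" unfolding A(2) by (simp add: dist_real_def abs_minus_commute)
  qed
qed

section \<open>Saddle values\<close>

lemma saddle_value_abs_diff_le:
  fixes f g :: "'a \<Rightarrow> 'b \<Rightarrow> real"
  assumes f_saddle: "a \<in> A" "b \<in> B" "(INF x\<in>A. f x b) = f a b" "f a b = (SUP y\<in>B. f a y)"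
    and g_saddle: "a' \<in> A" "b' \<in> B" "(INF x\<in>A. g x b') = g a' b'" "g a' b' = (SUP y\<in>B. g a' y)"
    and bounded: "\<And>x y. x \<in> A \<Longrightarrow> y \<in> B \<Longrightarrow> \<bar>f x y\<bar> \<le> C \<and> \<bar>g x y\<bar> \<le> C"
    and close: "\<And>x y. x \<in> A \<Longrightarrow> y \<in> B \<Longrightarrow> \<bar>f x y - g x y\<bar> \<le> e"
  shows "\<bar>f a b - g a' b'\<bar> \<le> e"
proof -
  have bdd: "bdd_below ((\<lambda>x. h x y) ` A)" "bdd_above ((\<lambda>y. h x y) ` B)"
    if "h = f \<or> h = g" "x \<in> A" "y \<in> B" for h x y
    using bounded that by (intro bdd_belowI2[where m="-C"] bdd_aboveI2[where M=C], fastforce)+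
  \<comment> \<open>Each saddle value is squeezed between the other's value and a cross term.\<close>
  have "g a' b' \<le> g a b'"
    unfolding g_saddle(3)[symmetric] by (intro cINF_lower bdd) (use f_saddle g_saddle in auto)
  also have "\<dots> \<le> f a b' + e" using close[OF f_saddle(1) g_saddle(2)] by linarith
  also have "f a b' \<le> f a b"
    unfolding f_saddle(4) by (intro cSUP_upper bdd) (use f_saddle g_saddle in auto)
  finally have upper: "g a' b' \<le> f a b + e" by linarith
  have "f a b \<le> f a' b"
    unfolding f_saddle(3)[symmetric] by (intro cINF_lower bdd) (use f_saddle g_saddle in auto)
  also have "\<dots> \<le> g a' b + e" using close[OF g_saddle(1) f_saddle(2)] by linarith
  also have "g a' b \<le> g a' b'"
    unfolding g_saddle(4) by (intro cSUP_upper bdd) (use f_saddle g_saddle in auto)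
  finally have "f a b \<le> g a' b' + e" by linarith
  with upper show ?thesis by linarith
qed

locale zero_sum_game =
  fixes c :: "'x::polish_space \<times> 'u1::polish_space \<times> 'u2::polish_space \<Rightarrow> real"
    and U1 :: "'u1 set" and U2 :: "'u2 set"
    and Q1 :: "'x \<Rightarrow> 'y1::polish_space measure" and Q2 :: "'x \<Rightarrow> 'y2::polish_space measure"
  assumes cost_continuous: "continuous_on (UNIV \<times> U1 \<times> U2) c"
    and cost_bounded: "bounded (c ` (UNIV \<times> U1 \<times> U2))"
    and compact_actions: "compact U1" "compact U2"
    and kernels: "stoch_kernel Q1" "stoch_kernel Q2"
    and tv_continuous_kernels: "tv_continuous Q1" "tv_continuous Q2"
begin

definition cond_cost :: "('y1 \<Rightarrow> 'u1) \<Rightarrow> ('y2 \<Rightarrow> 'u2) \<Rightarrow> 'x \<Rightarrow> real" where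
  "cond_cost \<gamma>1 \<gamma>2 x = (\<integral>y1. (\<integral>y2. c (x, \<gamma>1 y1, \<gamma>2 y2) \<partial>Q2 x) \<partial>Q1 x)"

lemma Jcost_eq_integral_cond_cost: "Jcost c Q1 Q2 \<zeta> \<gamma>1 \<gamma>2 = integral\<^sup>L \<zeta> (cond_cost \<gamma>1 \<gamma>2)"
  unfolding Jcost_def cond_cost_def ..

lemma cost_boundedE:
  obtains B where "0 < B" "\<And>x u1 u2. u1 \<in> U1 \<Longrightarrow> u2 \<in> U2 \<Longrightarrow> \<bar>c (x, u1, u2)\<bar> \<le> B"
proof -
  obtain B where B: "\<And>z. z \<in> UNIV \<times> U1 \<times> U2 \<Longrightarrow> \<bar>c z\<bar> \<le> B"
    using cost_bounded unfolding bounded_iff by auto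
  show ?thesis
  proof (rule that[of "\<bar>B\<bar> + 1"])
    show "\<bar>c (x, u1, u2)\<bar> \<le> \<bar>B\<bar> + 1" if "u1 \<in> U1" "u2 \<in> U2" for x u1 u2
      using B[of "(x, u1, u2)"] that by simp
  qed simp
qed

lemma measurable_cost_policies:
  assumes "\<gamma>1 \<in> policies U1" "\<gamma>2 \<in> policies U2"
  shows "(\<lambda>(y1, y2). c (x, \<gamma>1 y1, \<gamma>2 y2)) \<in> borel_measurable (borel \<Otimes>\<^sub>M borel)"
proof -
  have [measurable]: "\<gamma>1 \<in> borel_measurable borel" "\<gamma>2 \<in> borel_measurable borel"
    using assms unfolding policies_def by auto
  have "closed (UNIV \<times> U1 \<times> U2)" using compact_actions by (intro closed_Times closed_UNIV compact_imp_closed)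
  with cost_continuous show ?thesis
    unfolding case_prod_beta
    by (rule measurable_continuous_on_closed_comp) (use assms in \<open>auto simp: policies_def\<close>)
qed

lemma measurable_integral_cost_policies:
  assumes "\<gamma>1 \<in> policies U1" "\<gamma>2 \<in> policies U2" "borel_prob P"
  shows "(\<lambda>y1. \<integral>y2. c (x, \<gamma>1 y1, \<gamma>2 y2) \<partial>P) \<in> borel_measurable borel"
proof -
  interpret prob_space P by (rule borel_probD(1)[OF assms(3)])
  have "(\<lambda>(y1, y2). c (x, \<gamma>1 y1, \<gamma>2 y2)) \<in> borel_measurable (borel \<Otimes>\<^sub>M P)"
    using measurable_cost_policies[OF assms(1,2)]
    by (simp add: sets_pair_measure_cong[OF refl borel_probD(2)[OF assms(3)]] cong: measurable_cong_sets)
  then show ?thesis by (rule borel_measurable_lebesgue_integral)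
qed

lemma abs_cond_cost_diff_le:
  assumes "\<gamma>1 \<in> policies U1" "\<gamma>2 \<in> policies U2"
    and B: "\<And>x u1 u2. u1 \<in> U1 \<Longrightarrow> u2 \<in> U2 \<Longrightarrow> \<bar>c (x, u1, u2)\<bar> \<le> B"
    and close: "\<And>u1 u2. u1 \<in> U1 \<Longrightarrow> u2 \<in> U2 \<Longrightarrow> \<bar>c (x', u1, u2) - c (x, u1, u2)\<bar> \<le> \<epsilon>"
  shows "\<bar>cond_cost \<gamma>1 \<gamma>2 x' - cond_cost \<gamma>1 \<gamma>2 x\<bar>
    \<le> \<epsilon> + B * tv_dist (Q2 x') (Q2 x) + B * tv_dist (Q1 x') (Q1 x)"
proof -
  have actions: "\<gamma>1 y1 \<in> U1" "\<gamma>2 y2 \<in> U2" for y1 y2 using assms(1,2) unfolding policies_def by auto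
  have Q: "borel_prob (Q1 z)" "borel_prob (Q2 z)" for z using stoch_kernel_borel_prob kernels by blast+
  define I where "I z P y1 = (\<integral>y2. c (z, \<gamma>1 y1, \<gamma>2 y2) \<partial>P)" for z P y1
  have meas_c: "(\<lambda>y2. c (z, \<gamma>1 y1, \<gamma>2 y2)) \<in> borel_measurable borel" for z y1
    using measurable_Pair2[OF measurable_cost_policies[OF assms(1,2)]] by simp
  have meas_I: "I z P \<in> borel_measurable borel" if "borel_prob P" for z P
    unfolding I_def by (rule measurable_integral_cost_policies[OF assms(1,2) that])
  have bound_I: "\<bar>I z P y1\<bar> \<le> B" if "borel_prob P" for z P y1
    unfolding I_def by (intro prob_space.abs_integral_le_const[OF borel_probD(1)[OF that]] B actions)
  have meas_I_Q: "I z (Q2 w) \<in> borel_measurable (Q1 v)" for z w v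
    by (rule borel_prob_measurable[OF Q(1) meas_I[OF Q(2)]])
  have meas_c_Q: "(\<lambda>y2. c (z, \<gamma>1 y1, \<gamma>2 y2)) \<in> borel_measurable (Q2 w)" for z y1 w
    by (rule borel_prob_measurable[OF Q(2) meas_c])
  have "\<bar>integral\<^sup>L (Q1 x') (I x' (Q2 x')) - integral\<^sup>L (Q1 x') (I x (Q2 x'))\<bar> \<le> \<epsilon>"
  proof (rule prob_space.abs_integral_diff_le[OF borel_probD(1)[OF Q(1)] meas_I_Q meas_I_Q
      bound_I[OF Q(2)] bound_I[OF Q(2)]])
    show "\<bar>I x' (Q2 x') y1 - I x (Q2 x') y1\<bar> \<le> \<epsilon>" for y1
      unfolding I_def
      by (rule prob_space.abs_integral_diff_le[OF borel_probD(1)[OF Q(2)] meas_c_Q meas_c_Q])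
         (auto intro: B actions close)
  qed
  moreover have "\<bar>integral\<^sup>L (Q1 x') (I x (Q2 x')) - integral\<^sup>L (Q1 x') (I x (Q2 x))\<bar> \<le> B * tv_dist (Q2 x') (Q2 x)"
  proof (rule prob_space.abs_integral_diff_le[OF borel_probD(1)[OF Q(1)] meas_I_Q meas_I_Q
      bound_I[OF Q(2)] bound_I[OF Q(2)]])
    show "\<bar>I x (Q2 x') y1 - I x (Q2 x) y1\<bar> \<le> B * tv_dist (Q2 x') (Q2 x)" for y1
      unfolding I_def by (rule abs_integral_diff_le_tv_dist[OF Q(2) Q(2) meas_c]) (intro B actions)
  qed
  moreover have "\<bar>integral\<^sup>L (Q1 x') (I x (Q2 x)) - integral\<^sup>L (Q1 x) (I x (Q2 x))\<bar> \<le> B * tv_dist (Q1 x') (Q1 x)"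
    by (rule abs_integral_diff_le_tv_dist[OF Q(1) Q(1) meas_I[OF Q(2)] bound_I[OF Q(2)]])
  ultimately show ?thesis unfolding cond_cost_def I_def[symmetric] by linarith
qed

lemma abs_cond_cost_le:
  assumes "\<gamma>1 \<in> policies U1" "\<gamma>2 \<in> policies U2"
    and B: "\<And>x u1 u2. u1 \<in> U1 \<Longrightarrow> u2 \<in> U2 \<Longrightarrow> \<bar>c (x, u1, u2)\<bar> \<le> B"
  shows "\<bar>cond_cost \<gamma>1 \<gamma>2 x\<bar> \<le> B"
proof -
  have Q: "prob_space (Q1 x)" "prob_space (Q2 x)"
    using borel_probD(1) stoch_kernel_borel_prob kernels by blast+
  show ?thesis
    unfolding cond_cost_def using assms unfolding policies_def
    by (intro prob_space.abs_integral_le_const[OF Q(1)] prob_space.abs_integral_le_const[OF Q(2)]) auto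
qed

lemma cond_cost_equicontinuous:
  assumes "0 < e"
  shows "\<exists>d>0. \<forall>x'. dist x' x < d \<longrightarrow> (\<forall>p\<in>policies U1 \<times> policies U2.
    \<bar>cond_cost (fst p) (snd p) x' - cond_cost (fst p) (snd p) x\<bar> \<le> e)"
proof -
  obtain B where "0 < B" and B: "\<And>x u1 u2. u1 \<in> U1 \<Longrightarrow> u2 \<in> U2 \<Longrightarrow> \<bar>c (x, u1, u2)\<bar> \<le> B"
    using cost_boundedE by metis
  have "0 < e / 3" "0 < e / (3 * B)" using \<open>0 < e\<close> \<open>0 < B\<close> by simp_all
  obtain d1 where d1: "0 < d1"
    "\<And>x' u. dist x' x < d1 \<Longrightarrow> u \<in> U1 \<times> U2 \<Longrightarrow> \<bar>c (x', u) - c (x, u)\<bar> < e / 3"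
    using continuous_on_uniform_in_compact_param[OF cost_continuous compact_Times[OF compact_actions] \<open>0 < e / 3\<close>]
    by blast
  obtain d2 where d2: "0 < d2" "\<And>x'. dist x' x < d2 \<Longrightarrow> tv_dist (Q1 x') (Q1 x) < e / (3 * B)"
    using tv_continuousE[OF tv_continuous_kernels(1) \<open>0 < e / (3 * B)\<close>] by blast
  obtain d3 where d3: "0 < d3" "\<And>x'. dist x' x < d3 \<Longrightarrow> tv_dist (Q2 x') (Q2 x) < e / (3 * B)"
    using tv_continuousE[OF tv_continuous_kernels(2) \<open>0 < e / (3 * B)\<close>] by blast
  show ?thesis
  proof (intro exI[of _ "min d1 (min d2 d3)"] conjI allI impI ballI)
    fix x' and p :: "('y1 \<Rightarrow> 'u1) \<times> ('y2 \<Rightarrow> 'u2)"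
    assume x': "dist x' x < min d1 (min d2 d3)" and p: "p \<in> policies U1 \<times> policies U2"
    have "B * tv_dist (Q1 x') (Q1 x) \<le> e / 3" "B * tv_dist (Q2 x') (Q2 x) \<le> e / 3"
      using d2(2)[of x'] d3(2)[of x'] x' \<open>0 < B\<close> by (simp_all add: field_simps)
    moreover have "\<bar>c (x', u1, u2) - c (x, u1, u2)\<bar> \<le> e / 3" if "u1 \<in> U1" "u2 \<in> U2" for u1 u2
      using d1(2)[of x' "(u1, u2)"] x' that by simp
    then have "\<bar>cond_cost (fst p) (snd p) x' - cond_cost (fst p) (snd p) x\<bar>
      \<le> e / 3 + B * tv_dist (Q2 x') (Q2 x) + B * tv_dist (Q1 x') (Q1 x)"
      using p by (intro abs_cond_cost_diff_le[OF _ _ B]) auto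
    ultimately show "\<bar>cond_cost (fst p) (snd p) x' - cond_cost (fst p) (snd p) x\<bar> \<le> e" by linarith
  qed (use d1 d2 d3 in simp)
qed

lemma Jcost_uniform_convergence:
  assumes prior: "borel_prob \<zeta>" "\<And>m. borel_prob (\<zeta>s m)" and weak: "weak_conv_seq \<zeta>s \<zeta>"
    and "0 < e"
  shows "eventually (\<lambda>m. \<forall>\<gamma>1\<in>policies U1. \<forall>\<gamma>2\<in>policies U2.
    \<bar>Jcost c Q1 Q2 (\<zeta>s m) \<gamma>1 \<gamma>2 - Jcost c Q1 Q2 \<zeta> \<gamma>1 \<gamma>2\<bar> \<le> e) sequentially"
proof -
  obtain B where "0 < B" and B: "\<And>x u1 u2. u1 \<in> U1 \<Longrightarrow> u2 \<in> U2 \<Longrightarrow> \<bar>c (x, u1, u2)\<bar> \<le> B"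
    using cost_boundedE by metis
  have "eventually (\<lambda>m. \<forall>p\<in>policies U1 \<times> policies U2.
    \<bar>integral\<^sup>L (\<zeta>s m) (cond_cost (fst p) (snd p)) - integral\<^sup>L \<zeta> (cond_cost (fst p) (snd p))\<bar> \<le> e) sequentially"
  proof (rule weak_conv_seq_uniform_equicontinuous[OF prior weak _ cond_cost_equicontinuous \<open>0 < e\<close>])
    show "\<bar>cond_cost (fst p) (snd p) x\<bar> \<le> B" if "p \<in> policies U1 \<times> policies U2" for p x
      using that by (intro abs_cond_cost_le B) auto
  qed
  then show ?thesis by (simp add: Jcost_eq_integral_cond_cost)
qed

lemma abs_Jcost_le:
  assumes "borel_prob \<zeta>" "\<gamma>1 \<in> policies U1" "\<gamma>2 \<in> policies U2"
    and "\<And>x u1 u2. u1 \<in> U1 \<Longrightarrow> u2 \<in> U2 \<Longrightarrow> \<bar>c (x, u1, u2)\<bar> \<le> B"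
  shows "\<bar>Jcost c Q1 Q2 \<zeta> \<gamma>1 \<gamma>2\<bar> \<le> B"
  unfolding Jcost_eq_integral_cond_cost
  by (intro prob_space.abs_integral_le_const[OF borel_probD(1)[OF assms(1)]] abs_cond_cost_le assms(2-4))

lemma saddle_value_abs_diff_le_uniform:
  assumes "borel_prob \<zeta>" "borel_prob \<zeta>'"
    and "saddle_point c U1 U2 Q1 Q2 \<zeta> \<gamma>1 \<gamma>2" "saddle_point c U1 U2 Q1 Q2 \<zeta>' \<gamma>1' \<gamma>2'"
    and close: "\<forall>\<gamma>1\<in>policies U1. \<forall>\<gamma>2\<in>policies U2. \<bar>Jcost c Q1 Q2 \<zeta> \<gamma>1 \<gamma>2 - Jcost c Q1 Q2 \<zeta>' \<gamma>1 \<gamma>2\<bar> \<le> e"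
  shows "\<bar>Jcost c Q1 Q2 \<zeta> \<gamma>1 \<gamma>2 - Jcost c Q1 Q2 \<zeta>' \<gamma>1' \<gamma>2'\<bar> \<le> e"
proof -
  obtain B where "0 < B" and B: "\<And>x u1 u2. u1 \<in> U1 \<Longrightarrow> u2 \<in> U2 \<Longrightarrow> \<bar>c (x, u1, u2)\<bar> \<le> B"
    using cost_boundedE by metis
  show ?thesis
  proof (rule saddle_value_abs_diff_le[where f="Jcost c Q1 Q2 \<zeta>" and g="Jcost c Q1 Q2 \<zeta>'" and C=B])
    show "\<bar>Jcost c Q1 Q2 \<zeta> \<gamma>1'' \<gamma>2''\<bar> \<le> B \<and> \<bar>Jcost c Q1 Q2 \<zeta>' \<gamma>1'' \<gamma>2''\<bar> \<le> B"
      if "\<gamma>1'' \<in> policies U1" "\<gamma>2'' \<in> policies U2" for \<gamma>1'' \<gamma>2''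
      using abs_Jcost_le[OF assms(1) that B] abs_Jcost_le[OF assms(2) that B] by simp
  qed (use close assms(3,4) in \<open>simp_all add: saddle_point_def\<close>)
qed

end

theorem theorem3p4:
  fixes c :: "'x::polish_space \<times> 'u1::polish_space \<times> 'u2::polish_space \<Rightarrow> real"
    and U1 :: "'u1 set" and U2 :: "'u2 set"
    and Q1 :: "'x \<Rightarrow> 'y1::polish_space measure"
    and Q2 :: "'x \<Rightarrow> 'y2::polish_space measure"
    and \<zeta> :: "'x measure" and \<zeta>s :: "nat \<Rightarrow> 'x measure"
    and \<gamma>1 :: "'y1 \<Rightarrow> 'u1" and \<gamma>2 :: "'y2 \<Rightarrow> 'u2"
    and \<gamma>1s :: "nat \<Rightarrow> 'y1 \<Rightarrow> 'u1" and \<gamma>2s :: "nat \<Rightarrow> 'y2 \<Rightarrow> 'u2"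
  assumes A2_cont: "continuous_on (UNIV \<times> U1 \<times> U2) c"
    and A2_bdd: "bounded (c ` (UNIV \<times> U1 \<times> U2))"
    and A4: "compact U1" "compact U2"
    and A6_kernel: "stoch_kernel Q1" "stoch_kernel Q2"
    and A6_tv: "tv_continuous Q1" "tv_continuous Q2"
    and prior: "borel_prob \<zeta>" "\<And>m. borel_prob (\<zeta>s m)"
    and weak: "weak_conv_seq \<zeta>s \<zeta>"
    and saddle: "saddle_point c U1 U2 Q1 Q2 \<zeta> \<gamma>1 \<gamma>2"
    and saddle_m: "\<And>m. saddle_point c U1 U2 Q1 Q2 (\<zeta>s m) (\<gamma>1s m) (\<gamma>2s m)"
  shows "(\<lambda>m. Jcost c Q1 Q2 (\<zeta>s m) (\<gamma>1s m) (\<gamma>2s m)) \<longlonglongrightarrow> Jcost c Q1 Q2 \<zeta> \<gamma>1 \<gamma>2"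
proof -
  interpret zero_sum_game c U1 U2 Q1 Q2 by unfold_locales (fact assms)+
  show ?thesis
  proof (rule tendstoI)
    fix e :: real assume "0 < e"
    then have "0 < e / 2" by simp
    from Jcost_uniform_convergence[OF prior weak this]
    show "eventually (\<lambda>m. dist (Jcost c Q1 Q2 (\<zeta>s m) (\<gamma>1s m) (\<gamma>2s m)) (Jcost c Q1 Q2 \<zeta> \<gamma>1 \<gamma>2) < e)
      sequentially"
    proof (rule eventually_mono)
      fix m
      assume "\<forall>\<gamma>1\<in>policies U1. \<forall>\<gamma>2\<in>policies U2.
        \<bar>Jcost c Q1 Q2 (\<zeta>s m) \<gamma>1 \<gamma>2 - Jcost c Q1 Q2 \<zeta> \<gamma>1 \<gamma>2\<bar> \<le> e / 2"
      then have "\<bar>Jcost c Q1 Q2 (\<zeta>s m) (\<gamma>1s m) (\<gamma>2s m) - Jcost c Q1 Q2 \<zeta> \<gamma>1 \<gamma>2\<bar> \<le> e / 2"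
        by (rule saddle_value_abs_diff_le_uniform[OF prior(2) prior(1) saddle_m saddle])
      with \<open>0 < e\<close> show "dist (Jcost c Q1 Q2 (\<zeta>s m) (\<gamma>1s m) (\<gamma>2s m)) (Jcost c Q1 Q2 \<zeta> \<gamma>1 \<gamma>2) < e"
        by (simp add: dist_real_def)
    qed
  qed
qed

end
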